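(* Let $D$ be a division ring with infinite center $F$, let $n\geq 3$ be an integer, and let $p\in F[x]$ be a nonconstant polynomial. Then every matrix in $\mathrm{M}_n(D)$ can be expressed as a product of three elements of $p[\mathrm{M}_n(D),\mathrm{M}_n(D)]=\{p(AB)-p(BA)\mid A,B\in\mathrm{M}_n(D)\}$. *)

theory Defs
  imports "HOL-Computational_Algebra.Polynomial" "Jordan_Normal_Form.Matrix"
begin

definition ring_center :: "'a::ring set" where
  "ring_center = {z. \<forall>x. z * x = x * z}"

definition poly_mat :: "'a::ring_1 poly \<Rightarrow> 'a mat \<Rightarrow> 'a mat" where
  "poly_mat p A = mat (dim_row A) (dim_col A)
     (\<lambda>(i,j). \<Sum>k\<le>degree p. coeff p k * (A ^\<^sub>m k) $$ (i,j))"

definition poly_commutators :: "'a::ring_1 poly \<Rightarrow> nat \<Rightarrow> 'a mat set" where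
  "poly_commutators p n =
     {poly_mat p (A * B) - poly_mat p (B * A) | A B. A \<in> carrier_mat n n \<and> B \<in> carrier_mat n n}"

end

theory Submission
  imports Defs "HOL-Combinatorics.Cycles"
begin

(* Since the center is infinite and a nonconstant central polynomial takes each value only finitely
   often on it, there are central lam_1, ..., lam_n with pairwise distinct values a_i = p(lam_i).
   For L = diag(lam) we have p(L) = diag(a), and two conjugates U p(L) U^-1 and U' p(L) U'^-1 differ
   by p(AB) - p(BA) with A = U L U'^-1, B = U' U^-1. A triangular matrix with distinct central
   diagonal entries is similar to its diagonal, so every matrix N with diagonal entries
   a_(sigma i) - a_i for a permutation sigma lies in p[M_n, M_n]: split N = T1 - T2 with T1 upper
   triangular with diagonal a o sigma and T2 lower triangular with diagonal a. In particular every
   matrix with zero diagonal does.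

   If the number of nonzero diagonal entries of M is not 1, choose sigma moving exactly their
   indices and a diagonal g with g M having diagonal a o sigma - a; then M = X Y (g M) where X Y =
   g^-1 is a product of two zero-diagonal matrices (built from a fixed-point-free permutation).
   If M has exactly one nonzero diagonal entry and a nonzero off-diagonal entry, a transvection
   conjugates M into the previous case. Otherwise M = m E_kk = (m E_ki) E_ij E_jk with i, j, k
   distinct, which is where n >= 3 is needed. *)

section \<open>The center of a division ring\<close>

lemma ring_centerD: "z \<in> ring_center \<Longrightarrow> z * x = x * z"
  by (simp add: ring_center_def)

lemma ring_center_0 [simp]: "0 \<in> ring_center"
  and ring_center_1 [simp]: "(1::'a::ring_1) \<in> ring_center"
  by (auto simp: ring_center_def)

lemma ring_center_add [simp]: "a \<in> ring_center \<Longrightarrow> b \<in> ring_center \<Longrightarrow> a + b \<in> ring_center"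
  and ring_center_uminus [simp]: "a \<in> ring_center \<Longrightarrow> - a \<in> ring_center"
  and ring_center_diff [simp]: "a \<in> ring_center \<Longrightarrow> b \<in> ring_center \<Longrightarrow> a - b \<in> ring_center"
  by (auto simp: ring_center_def algebra_simps)

lemma ring_center_mult [simp]:
  assumes "a \<in> ring_center" "b \<in> ring_center"
  shows "a * b \<in> ring_center"
proof -
  have "a * b * x = x * (a * b)" for x
    using ring_centerD[OF assms(1), of x] ring_centerD[OF assms(2), of x]
    by (simp add: mult.assoc) (simp add: mult.assoc[symmetric])
  then show ?thesis by (simp add: ring_center_def)
qed

lemma ring_center_power [simp]: "(a::'a::ring_1) \<in> ring_center \<Longrightarrow> a ^ k \<in> ring_center"
  by (induct k) auto

lemma ring_center_sum [simp]: "(\<And>i. i \<in> I \<Longrightarrow> f i \<in> ring_center) \<Longrightarrow> sum f I \<in> ring_center"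
  by (induct I rule: infinite_finite_induct) auto

lemma ring_center_inverse [simp]:
  assumes a: "(a::'a::division_ring) \<in> ring_center"
  shows "inverse a \<in> ring_center"
proof (cases "a = 0")
  case False
  have "inverse a * x = x * inverse a" for x
  proof -
    have "inverse a * x = inverse a * (x * a) * inverse a"
      using False by (simp add: mult.assoc)
    also have "\<dots> = inverse a * (a * x) * inverse a"
      using ring_centerD[OF a, of x] by simp
    also have "\<dots> = x * inverse a"
      using False by (simp add: mult.assoc[symmetric])
    finally show ?thesis .
  qed
  then show ?thesis by (simp add: ring_center_def)
qed simp

(* The polynomial library evaluates only over commutative rings; the center, as a type of its own,
   is a field, which gives finiteness of the central solutions of p(x) = v. *)
typedef (overloaded) ('a::division_ring) center = "ring_center :: 'a set"
  morphisms rep_center abs_center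
  using ring_center_0 by blast

setup_lifting type_definition_center

instantiation center :: (division_ring) field
begin
lift_definition zero_center :: "'a center" is 0 by simp
lift_definition one_center :: "'a center" is 1 by simp
lift_definition plus_center :: "'a center \<Rightarrow> 'a center \<Rightarrow> 'a center" is "(+)" by simp
lift_definition minus_center :: "'a center \<Rightarrow> 'a center \<Rightarrow> 'a center" is "(-)" by simp
lift_definition uminus_center :: "'a center \<Rightarrow> 'a center" is uminus by simp
lift_definition times_center :: "'a center \<Rightarrow> 'a center \<Rightarrow> 'a center" is "(*)" by simp
lift_definition inverse_center :: "'a center \<Rightarrow> 'a center" is inverse by simp
lift_definition divide_center :: "'a center \<Rightarrow> 'a center \<Rightarrow> 'a center" is "\<lambda>a b. a * inverse b"
  by simp
instance
  by standard (transfer; auto simp: algebra_simps ring_centerD)+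
end

lemma rep_center_sum: "rep_center (sum f I) = (\<Sum>i\<in>I. rep_center (f i))"
  by (induct I rule: infinite_finite_induct) (auto simp: zero_center.rep_eq plus_center.rep_eq)

lemma rep_center_power: "rep_center (x ^ k) = rep_center x ^ k"
  by (induct k) (auto simp: one_center.rep_eq times_center.rep_eq)

definition poly_eval :: "'a::ring_1 poly \<Rightarrow> 'a \<Rightarrow> 'a" where
  "poly_eval p x = (\<Sum>k\<le>degree p. coeff p k * x ^ k)"

lemma poly_eval_in_ring_center:
  "\<forall>i. coeff p i \<in> ring_center \<Longrightarrow> x \<in> ring_center \<Longrightarrow> poly_eval p x \<in> ring_center"
  by (simp add: poly_eval_def)

lemma abs_center_0 [simp]: "abs_center 0 = 0"
  by (metis rep_center_inverse zero_center.rep_eq)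

lemma abs_center_eq_0_iff:
  assumes "x \<in> ring_center"
  shows "abs_center x = 0 \<longleftrightarrow> x = 0"
  using abs_center_inject[OF assms ring_center_0] by simp

lemma degree_map_poly_abs_center:
  assumes "\<forall>i. coeff p i \<in> ring_center"
  shows "degree (map_poly abs_center p) = degree p"
proof (cases "p = 0")
  case False
  then have "coeff (map_poly abs_center p) (degree p) \<noteq> 0"
    using assms by (simp add: coeff_map_poly abs_center_eq_0_iff)
  then show ?thesis
    by (intro le_antisym map_poly_degree_leq le_degree)
qed simp

lemma poly_map_abs_center:
  fixes p :: "'a::division_ring poly"
  assumes coeffs: "\<forall>i. coeff p i \<in> ring_center" and x: "x \<in> ring_center"
  shows "rep_center (poly (map_poly abs_center p) (abs_center x)) = poly_eval p x"
  using coeffs x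
  by (simp add: poly_altdef degree_map_poly_abs_center poly_eval_def rep_center_sum coeff_map_poly
      times_center.rep_eq rep_center_power abs_center_inverse)

lemma finite_poly_eval_fiber:
  fixes p :: "'a::division_ring poly"
  assumes coeffs: "\<forall>i. coeff p i \<in> ring_center" and deg: "degree p \<ge> 1"
  shows "finite {x \<in> ring_center. poly_eval p x = v}"
proof -
  define P where "P = map_poly abs_center p - [:abs_center v:]"
  have "coeff P (degree p) = abs_center (lead_coeff p)"
    using deg by (simp add: P_def coeff_map_poly coeff_pCons split: nat.split)
  also have "\<dots> \<noteq> 0"
    using deg coeffs by (auto simp: abs_center_eq_0_iff)
  finally have "P \<noteq> 0" by auto
  have "{x \<in> ring_center. poly_eval p x = v} \<subseteq> rep_center ` {y. poly P y = 0}"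
  proof
    fix x assume x: "x \<in> {x \<in> ring_center. poly_eval p x = v}"
    then have "rep_center (poly (map_poly abs_center p) (abs_center x)) = v"
      using poly_map_abs_center[OF coeffs] by auto
    then have "poly P (abs_center x) = 0"
      by (simp add: P_def) (metis rep_center_inverse)
    then show "x \<in> rep_center ` {y. poly P y = 0}"
      using x by (force simp: abs_center_inverse)
  qed
  then show ?thesis
    using poly_roots_finite[OF \<open>P \<noteq> 0\<close>] finite_subset by blast
qed

lemma infinite_poly_eval_image:
  fixes p :: "'a::division_ring poly"
  assumes "infinite (ring_center :: 'a set)" "\<forall>i. coeff p i \<in> ring_center" "degree p \<ge> 1"
  shows "infinite (poly_eval p ` ring_center)"
proof
  assume "finite (poly_eval p ` ring_center)"
  then have "finite (\<Union>v\<in>poly_eval p ` ring_center. {x \<in> ring_center. poly_eval p x = v})"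
    using finite_poly_eval_fiber[OF assms(2,3)] by blast
  moreover have "ring_center \<subseteq> (\<Union>v\<in>poly_eval p ` ring_center. {x \<in> ring_center. poly_eval p x = v})"
    by blast
  ultimately show False
    using assms(1) finite_subset by blast
qed

lemma ex_central_points_distinct_poly_values:
  fixes p :: "'a::division_ring poly" and n :: nat
  assumes "infinite (ring_center :: 'a set)" "\<forall>i. coeff p i \<in> ring_center" "degree p \<ge> 1"
  obtains lam where "\<forall>i. lam i \<in> ring_center" "inj_on (\<lambda>i. poly_eval p (lam i)) {..<n}"
proof -
  obtain B where "finite B" "card B = n" "B \<subseteq> poly_eval p ` ring_center"
    using infinite_arbitrarily_large[OF infinite_poly_eval_image[OF assms]] by blast
  then obtain C where C: "C \<subseteq> ring_center" "inj_on (poly_eval p) C" "B = poly_eval p ` C"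
    by (auto simp: subset_image_inj)
  with \<open>finite B\<close> \<open>card B = n\<close> have "finite C" "card C = n"
    by (auto simp: finite_image_iff card_image)
  then obtain h where h: "bij_betw h {..<n} C"
    using ex_bij_betw_nat_finite lessThan_atLeast0 by metis
  define lam where "lam i = (if i < n then h i else 0)" for i
  have "\<forall>i. lam i \<in> ring_center"
    using h C(1) by (auto simp: lam_def bij_betw_def)
  moreover have "inj_on (\<lambda>i. poly_eval p (lam i)) {..<n}"
  proof -
    have "inj_on (poly_eval p \<circ> h) {..<n}"
      using h C(2) by (auto simp: bij_betw_def intro: comp_inj_on)
    then show ?thesis
      by (rule inj_on_cong[THEN iffD1, rotated]) (simp add: lam_def)
  qed
  ultimately show ?thesis using that by blast
qed

section \<open>Permutation matrices, diagonal matrices and similarity\<close>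

definition perm_mat :: "nat \<Rightarrow> (nat \<Rightarrow> nat) \<Rightarrow> 'a::semiring_1 mat" where
  "perm_mat n \<pi> = mat n n (\<lambda>(i, j). if \<pi> i = j then 1 else 0)"

lemma perm_mat_carrier [simp]: "perm_mat n \<pi> \<in> carrier_mat n n"
  by (simp add: perm_mat_def)

lemma dim_perm_mat [simp]: "dim_row (perm_mat n \<pi>) = n" "dim_col (perm_mat n \<pi>) = n"
  by (simp_all add: perm_mat_def)

lemma index_perm_mat [simp]:
  "i < n \<Longrightarrow> j < n \<Longrightarrow> perm_mat n \<pi> $$ (i, j) = (if \<pi> i = j then 1 else 0)"
  by (simp add: perm_mat_def)

lemma perm_mat_mult_index:
  assumes "\<pi> permutes {..<n}" "A \<in> carrier_mat n m" "i < n" "j < m"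
  shows "(perm_mat n \<pi> * A) $$ (i, j) = A $$ (\<pi> i, j)"
proof -
  have "\<pi> i \<in> {0..<n}"
    using permutes_in_image[OF assms(1)] assms(3) by simp
  then show ?thesis
    using assms(2-4) by (simp add: scalar_prod_def if_distrib[of "\<lambda>x. x * _"] cong: if_cong)
qed

lemma mult_perm_mat_index:
  assumes "\<pi> permutes {..<n}" "A \<in> carrier_mat m n" "i < m" "j < n"
  shows "(A * perm_mat n \<pi>) $$ (i, j) = A $$ (i, inv_into UNIV \<pi> j)"
proof -
  have "\<pi> k = j \<longleftrightarrow> k = inv_into UNIV \<pi> j" for k
    using permutes_inv_eq[OF assms(1)] by metis
  moreover have "inv_into UNIV \<pi> j \<in> {0..<n}"
    using permutes_in_image[OF permutes_inv[OF assms(1)]] assms(4) by simp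
  ultimately show ?thesis
    using assms(2-4) by (simp add: scalar_prod_def if_distrib[of "\<lambda>x. _ * x"] cong: if_cong)
qed

lemma perm_mat_mult_perm_mat:
  assumes "\<pi> permutes {..<n}" "\<tau> permutes {..<n}"
  shows "perm_mat n \<pi> * perm_mat n \<tau> = (perm_mat n (\<tau> \<circ> \<pi>) :: 'a::semiring_1 mat)"
proof (rule eq_matI, goal_cases)
  case (1 i j)
  then show ?case
    using assms permutes_in_image[OF assms(1)]
    by (simp add: perm_mat_mult_index[where m = n] del: index_mult_mat)
qed auto

lemma perm_mat_id: "perm_mat n id = 1\<^sub>m n"
  by (rule eq_matI) auto

lemma perm_mat_inv:
  assumes "\<pi> permutes {..<n}"
  shows "perm_mat n \<pi> * perm_mat n (inv_into UNIV \<pi>) = (1\<^sub>m n :: 'a::semiring_1 mat)"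
    and "perm_mat n (inv_into UNIV \<pi>) * perm_mat n \<pi> = (1\<^sub>m n :: 'a::semiring_1 mat)"
  using assms permutes_inv[OF assms]
  by (simp_all add: perm_mat_mult_perm_mat permutes_inv_o perm_mat_id)

lemma similar_mat_permute_indices:
  assumes \<pi>: "\<pi> permutes {..<n}" and A: "A \<in> carrier_mat n n"
  shows "similar_mat (mat n n (\<lambda>(i, j). A $$ (\<pi> i, \<pi> j))) A"
proof (rule similar_matI)
  let ?P = "perm_mat n \<pi>" and ?Q = "perm_mat n (inv_into UNIV \<pi>)"
  show "mat n n (\<lambda>(i, j). A $$ (\<pi> i, \<pi> j)) = ?P * A * ?Q"
  proof (rule eq_matI, goal_cases)
    case (1 i j)
    then have ij: "i < n" "j < n"
      using A by auto
    have "(?P * A * ?Q) $$ (i, j) = (?P * A) $$ (i, \<pi> j)"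
      using mult_perm_mat_index[OF permutes_inv[OF \<pi>], of "?P * A" n i j] A ij
      by (simp add: inv_inv_eq[OF permutes_bij[OF \<pi>]] mult_carrier_mat[OF perm_mat_carrier A]
          del: index_mult_mat(1))
    also have "\<dots> = A $$ (\<pi> i, \<pi> j)"
      using perm_mat_mult_index[OF \<pi> A] ij permutes_in_image[OF \<pi>, of j] by simp
    finally show ?case
      using ij by simp
  qed auto
qed (use A perm_mat_inv[OF \<pi>] in auto)

lemma dim_mat_diag [simp]: "dim_row (mat_diag n f) = n" "dim_col (mat_diag n f) = n"
  by (simp_all add: mat_diag_def)

lemma index_mat_diag [simp]: "i < n \<Longrightarrow> j < n \<Longrightarrow> mat_diag n f $$ (i, j) = (if i = j then f i else 0)"
  by (simp add: mat_diag_def)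

lemma mat_diag_cong: "(\<And>i. i < n \<Longrightarrow> f i = g i) \<Longrightarrow> mat_diag n f = mat_diag n g"
  by (rule eq_matI) auto

lemma mat_diag_pow: "mat_diag n f ^\<^sub>m k = mat_diag n (\<lambda>i. f i ^ k)"
  by (induct k) (simp_all add: power_commutes)

lemma similar_mat_diag_permute:
  assumes "\<pi> permutes {..<n}"
  shows "similar_mat (mat_diag n (\<lambda>i. f (\<pi> i))) (mat_diag n f)"
proof -
  have "\<pi> i = \<pi> j \<longleftrightarrow> i = j" for i j
    using permutes_inj[OF assms] by (simp add: inj_eq)
  moreover have "\<pi> i < n" if "i < n" for i
    using permutes_in_image[OF assms] that by simp
  ultimately have "mat n n (\<lambda>(i, j). mat_diag n f $$ (\<pi> i, \<pi> j)) = mat_diag n (\<lambda>i. f (\<pi> i))"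
    by (intro eq_matI) simp_all
  then show ?thesis
    using similar_mat_permute_indices[OF assms mat_diag_dim, of f] by simp
qed

section \<open>Triangular matrices with distinct central diagonal\<close>

lemmas [trans] = similar_mat_trans

lemma similar_four_block_mat_sylvester:
  fixes A :: "'a::ring_1 mat"
  assumes A: "A \<in> carrier_mat n n" and D: "D \<in> carrier_mat m m" and X: "X \<in> carrier_mat n m"
  shows "similar_mat (four_block_mat A (X * D - A * X) (0\<^sub>m m n) D)
    (four_block_mat A (0\<^sub>m n m) (0\<^sub>m m n) D)"
proof (rule similar_matI)
  let ?S = "four_block_mat (1\<^sub>m n) X (0\<^sub>m m n) (1\<^sub>m m)"
  let ?S' = "four_block_mat (1\<^sub>m n) (- X) (0\<^sub>m m n) (1\<^sub>m m)"
  have "?S * ?S' = four_block_mat (1\<^sub>m n) (0\<^sub>m n m) (0\<^sub>m m n) (1\<^sub>m m)"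
    using X by (subst mult_four_block_mat[of _ n n _ m _ m _ _ n _ m]) (auto intro!: eq_matI)
  then show "?S * ?S' = 1\<^sub>m (n + m)"
    by simp
  have "?S' * ?S = four_block_mat (1\<^sub>m n) (0\<^sub>m n m) (0\<^sub>m m n) (1\<^sub>m m)"
    using X by (subst mult_four_block_mat[of _ n n _ m _ m _ _ n _ m]) (auto intro!: eq_matI)
  then show "?S' * ?S = 1\<^sub>m (n + m)"
    by simp
  have "?S * four_block_mat A (0\<^sub>m n m) (0\<^sub>m m n) D = four_block_mat A (X * D) (0\<^sub>m m n) D"
    using A D X by (subst mult_four_block_mat[of _ n n _ m _ m _ _ n _ m]) (auto intro!: eq_matI)
  also have "\<dots> * ?S' = four_block_mat A (X * D - A * X) (0\<^sub>m m n) D"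
    using A D X by (subst mult_four_block_mat[of _ n n _ m _ m _ _ n _ m]) (auto intro!: eq_matI)
  finally show "four_block_mat A (X * D - A * X) (0\<^sub>m m n) D =
      ?S * four_block_mat A (0\<^sub>m n m) (0\<^sub>m m n) D * ?S'"
    by simp
qed (use A D X in auto)

lemma similar_four_block_mat_lower_right:
  assumes wit: "similar_mat_wit D D' P Q"
    and A: "A \<in> carrier_mat n n" and B: "B \<in> carrier_mat n m" and D: "D \<in> carrier_mat m m"
  shows "similar_mat (four_block_mat A B (0\<^sub>m m n) D) (four_block_mat A (B * P) (0\<^sub>m m n) D')"
proof -
  note w = similar_mat_witD2[OF D wit]
  have "B = 1\<^sub>m n * (B * P) * Q"
    using w B by (simp add: assoc_mult_mat[of _ n m _ m _ m])
  moreover have "0\<^sub>m m n = P * 0\<^sub>m m n * 1\<^sub>m n"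
    using w by simp
  ultimately have "similar_mat_wit (four_block_mat A B (0\<^sub>m m n) D) (four_block_mat A (B * P) (0\<^sub>m m n) D')
      (four_block_mat (1\<^sub>m n) (0\<^sub>m n m) (0\<^sub>m m n) P) (four_block_mat (1\<^sub>m n) (0\<^sub>m n m) (0\<^sub>m m n) Q)"
    using w A B D by (intro similar_mat_wit_four_block[OF similar_mat_wit_refl[OF A] wit]) auto
  then show ?thesis
    by (auto simp: similar_mat_def)
qed

lemma similar_four_block_mat_scalar_diag:
  fixes t :: "'a::division_ring"
  assumes t: "t \<in> ring_center" and \<delta>: "\<forall>j<m. \<delta> j \<noteq> t" and B: "B \<in> carrier_mat 1 m"
  shows "similar_mat (four_block_mat (mat 1 1 (\<lambda>_. t)) B (0\<^sub>m m 1) (mat_diag m \<delta>))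
    (four_block_mat (mat 1 1 (\<lambda>_. t)) (0\<^sub>m 1 m) (0\<^sub>m m 1) (mat_diag m \<delta>))"
proof -
  define X where "X = mat 1 m (\<lambda>(_, j). B $$ (0, j) * inverse (\<delta> j - t))"
  have X: "X \<in> carrier_mat 1 m"
    by (simp add: X_def)
  have "X * mat_diag m \<delta> - mat 1 1 (\<lambda>_. t) * X = B"
  proof (rule eq_matI)
    fix i j assume "i < dim_row B" "j < dim_col B"
    then have ij: "i = 0" "j < m"
      using B by auto
    have "(X * mat_diag m \<delta> - mat 1 1 (\<lambda>_. t) * X) $$ (i, j) = X $$ (0, j) * \<delta> j - t * X $$ (0, j)"
      using ij by (simp add: X_def mat_diag_mult_right[of _ 1] scalar_prod_def)
    also have "\<dots> = X $$ (0, j) * (\<delta> j - t)"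
      using ring_centerD[OF t] by (simp add: algebra_simps)
    also have "\<dots> = B $$ (i, j)"
      using ij \<delta> by (simp add: X_def mult.assoc)
    finally show "(X * mat_diag m \<delta> - mat 1 1 (\<lambda>_. t) * X) $$ (i, j) = B $$ (i, j)" .
  qed (use B in \<open>auto simp: X_def\<close>)
  then show ?thesis
    using similar_four_block_mat_sylvester[of "mat 1 1 (\<lambda>_. t)" 1 "mat_diag m \<delta>" m X] X by simp
qed

lemma four_block_mat_first_row:
  assumes "T \<in> carrier_mat (Suc m) (Suc m)" "\<forall>i<m. T $$ (Suc i, 0) = 0"
  shows "T = four_block_mat (mat 1 1 (\<lambda>_. T $$ (0, 0))) (mat 1 m (\<lambda>(_, j). T $$ (0, Suc j)))
    (0\<^sub>m m 1) (mat m m (\<lambda>(i, j). T $$ (Suc i, Suc j)))"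
proof (rule eq_matI, goal_cases)
  case (1 i j)
  then show ?case
    using assms by (cases i; cases j) auto
qed (use assms in auto)

lemma mat_diag_Suc:
  "mat_diag (Suc m) f =
    four_block_mat (mat 1 1 (\<lambda>_. f 0)) (0\<^sub>m 1 m) (0\<^sub>m m 1) (mat_diag m (\<lambda>i. f (Suc i)))"
proof (rule eq_matI, goal_cases)
  case (1 i j)
  then show ?case
    by (cases i; cases j) auto
qed auto

lemma upper_triangular_similar_mat_diag:
  fixes T :: "'a::division_ring mat"
  assumes "T \<in> carrier_mat n n" "upper_triangular T"
    and "\<forall>i<n. T $$ (i, i) \<in> ring_center"
    and "\<forall>i<n. \<forall>j<n. T $$ (i, i) = T $$ (j, j) \<longrightarrow> i = j"
  shows "similar_mat T (mat_diag n (\<lambda>i. T $$ (i, i)))"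
  using assms
proof (induction n arbitrary: T)
  case 0
  then have "T = mat_diag 0 (\<lambda>i. T $$ (i, i))"
    by (intro eq_matI) auto
  then show ?case
    using similar_mat_refl[OF mat_diag_dim] by metis
next
  case (Suc m)
  define t where "t = T $$ (0, 0)"
  define B where "B = mat 1 m (\<lambda>(_, j). T $$ (0, Suc j))"
  define D where "D = mat m m (\<lambda>(i, j). T $$ (Suc i, Suc j))"
  define \<delta> where "\<delta> i = T $$ (Suc i, Suc i)" for i
  have D: "D \<in> carrier_mat m m"
    by (simp add: D_def)
  have T_eq: "T = four_block_mat (mat 1 1 (\<lambda>_. t)) B (0\<^sub>m m 1) D"
    using Suc.prems(1,2) unfolding t_def B_def D_def
    by (intro four_block_mat_first_row) (auto simp: upper_triangular_def)
  have "\<forall>i<m. \<forall>j<m. D $$ (i, i) = D $$ (j, j) \<longrightarrow> i = j"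
  proof (intro allI impI)
    fix i j assume "i < m" "j < m" "D $$ (i, i) = D $$ (j, j)"
    then show "i = j"
      using Suc.prems(4)[rule_format, of "Suc i" "Suc j"] by (simp add: D_def)
  qed
  then have "similar_mat D (mat_diag m (\<lambda>i. D $$ (i, i)))"
    using Suc.prems by (intro Suc.IH) (auto simp: D_def upper_triangular_def)
  moreover have "mat_diag m (\<lambda>i. D $$ (i, i)) = mat_diag m \<delta>"
    by (rule mat_diag_cong) (simp add: D_def \<delta>_def)
  ultimately obtain P Q where wit: "similar_mat_wit D (mat_diag m \<delta>) P Q"
    by (auto simp: similar_mat_def)
  have "similar_mat T (four_block_mat (mat 1 1 (\<lambda>_. t)) (B * P) (0\<^sub>m m 1) (mat_diag m \<delta>))"
    unfolding T_eq by (rule similar_four_block_mat_lower_right[OF wit _ _ D]) (auto simp: B_def)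
  also have "similar_mat \<dots> (four_block_mat (mat 1 1 (\<lambda>_. t)) (0\<^sub>m 1 m) (0\<^sub>m m 1) (mat_diag m \<delta>))"
    using Suc.prems(3,4) similar_mat_witD2[OF D wit]
    by (intro similar_four_block_mat_scalar_diag) (auto simp: t_def \<delta>_def B_def)
  finally show ?case
    by (simp add: mat_diag_Suc t_def \<delta>_def[abs_def])
qed

lemma lower_triangular_similar_mat_diag:
  fixes T :: "'a::division_ring mat"
  assumes T: "T \<in> carrier_mat n n" and lower: "\<forall>i<n. \<forall>j<n. i < j \<longrightarrow> T $$ (i, j) = 0"
    and central: "\<forall>i<n. T $$ (i, i) \<in> ring_center"
    and distinct: "\<forall>i<n. \<forall>j<n. T $$ (i, i) = T $$ (j, j) \<longrightarrow> i = j"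
  shows "similar_mat T (mat_diag n (\<lambda>i. T $$ (i, i)))"
proof -
  define \<rho> where "\<rho> i = (if i < n then n - 1 - i else i)" for i
  have \<rho>: "\<rho> permutes {..<n}"
    by (rule bij_imp_permutes[OF bij_betw_byWitness[where f' = \<rho>]]) (auto simp: \<rho>_def)
  define T' where "T' = mat n n (\<lambda>(i, j). T $$ (\<rho> i, \<rho> j))"
  have \<rho>_less: "\<rho> i < n" if "i < n" for i
    using that by (simp add: \<rho>_def)
  have "\<forall>i<n. \<forall>j<n. T' $$ (i, i) = T' $$ (j, j) \<longrightarrow> i = j"
  proof (intro allI impI)
    fix i j assume "i < n" "j < n" "T' $$ (i, i) = T' $$ (j, j)"
    then have "\<rho> i = \<rho> j"
      using distinct \<rho>_less by (simp add: T'_def)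
    with \<open>i < n\<close> \<open>j < n\<close> show "i = j"
      by (simp add: \<rho>_def)
  qed
  then have "similar_mat T' (mat_diag n (\<lambda>i. T' $$ (i, i)))"
    using lower central \<rho>_less
    by (intro upper_triangular_similar_mat_diag) (auto simp: T'_def upper_triangular_def \<rho>_def)
  also have "mat_diag n (\<lambda>i. T' $$ (i, i)) = mat_diag n (\<lambda>i. T $$ (\<rho> i, \<rho> i))"
    by (rule mat_diag_cong) (simp add: T'_def)
  finally have "similar_mat T' (mat_diag n (\<lambda>i. T $$ (i, i)))"
    by (rule similar_mat_trans[OF _ similar_mat_diag_permute[OF \<rho>]])
  then show ?thesis
    using similar_mat_trans[OF similar_mat_sym[OF similar_mat_permute_indices[OF \<rho> T]]]
    by (simp add: T'_def)
qed

section \<open>Polynomial commutators\<close>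

lemma index_mult_mat_sum:
  assumes "A \<in> carrier_mat m n" "B \<in> carrier_mat n l" "i < m" "j < l"
  shows "(A * B) $$ (i, j) = (\<Sum>k<n. A $$ (i, k) * B $$ (k, j))"
  using assms by (auto simp: scalar_prod_def lessThan_atLeast0 intro!: sum.cong)

lemma index_mult_mat3:
  assumes "P \<in> carrier_mat n n" "M \<in> carrier_mat n n" "Q \<in> carrier_mat n n" "i < n" "j < n"
  shows "(P * M * Q) $$ (i, j) = (\<Sum>a<n. \<Sum>b<n. P $$ (i, a) * M $$ (a, b) * Q $$ (b, j))"
proof -
  have "(P * M * Q) $$ (i, j) = (\<Sum>b<n. (P * M) $$ (i, b) * Q $$ (b, j))"
    using assms by (intro index_mult_mat_sum) auto
  also have "\<dots> = (\<Sum>b<n. \<Sum>a<n. P $$ (i, a) * M $$ (a, b) * Q $$ (b, j))"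
    using assms
    by (auto simp: index_mult_mat_sum[OF assms(1,2)] sum_distrib_right simp del: index_mult_mat(1)
        intro!: sum.cong)
  also have "\<dots> = (\<Sum>a<n. \<Sum>b<n. P $$ (i, a) * M $$ (a, b) * Q $$ (b, j))"
    by (rule sum.swap)
  finally show ?thesis .
qed

lemma poly_mat_carrier [simp]: "A \<in> carrier_mat n n \<Longrightarrow> poly_mat p A \<in> carrier_mat n n"
  by (simp add: poly_mat_def)

lemma index_poly_mat:
  "i < dim_row A \<Longrightarrow> j < dim_col A \<Longrightarrow>
    poly_mat p A $$ (i, j) = (\<Sum>k\<le>degree p. coeff p k * (A ^\<^sub>m k) $$ (i, j))"
  by (simp add: poly_mat_def)

lemma poly_mat_similar_mat_wit:
  assumes wit: "similar_mat_wit A B P Q" and coeffs: "\<forall>i. coeff p i \<in> ring_center"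
  shows "poly_mat p A = P * poly_mat p B * Q"
proof -
  define n where "n = dim_row A"
  note w = similar_mat_witD[OF n_def wit]
  have pB: "poly_mat p B \<in> carrier_mat n n"
    using w(5) by simp
  show ?thesis
  proof (rule eq_matI)
    fix i j assume "i < dim_row (P * poly_mat p B * Q)" "j < dim_col (P * poly_mat p B * Q)"
    with w have ij: "i < n" "j < n" by auto
    have central: "coeff p k * (x * y * z) = x * (coeff p k * y) * z" for k x y z
      using ring_centerD[of "coeff p k" x] coeffs by (simp add: mult.assoc[symmetric])
    have "poly_mat p A $$ (i, j) = (\<Sum>k\<le>degree p. coeff p k * (P * B ^\<^sub>m k * Q) $$ (i, j))"
      using ij w(4) by (simp add: index_poly_mat similar_mat_wit_pow_id[OF wit])
    also have "\<dots> = (\<Sum>k\<le>degree p. \<Sum>a<n. \<Sum>b<n.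
        P $$ (i, a) * (coeff p k * (B ^\<^sub>m k) $$ (a, b)) * Q $$ (b, j))"
      using ij w by (simp add: index_mult_mat3 sum_distrib_left central del: index_mult_mat(1))
    also have "\<dots> = (\<Sum>a<n. \<Sum>k\<le>degree p. \<Sum>b<n.
        P $$ (i, a) * (coeff p k * (B ^\<^sub>m k) $$ (a, b)) * Q $$ (b, j))"
      by (rule sum.swap)
    also have "\<dots> = (\<Sum>a<n. \<Sum>b<n. \<Sum>k\<le>degree p.
        P $$ (i, a) * (coeff p k * (B ^\<^sub>m k) $$ (a, b)) * Q $$ (b, j))"
      by (rule sum.cong[OF refl]) (rule sum.swap)
    also have "\<dots> = (P * poly_mat p B * Q) $$ (i, j)"
      using ij w pB
      by (simp add: index_mult_mat3 index_poly_mat sum_distrib_left sum_distrib_right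
          del: index_mult_mat(1))
    finally show "poly_mat p A $$ (i, j) = (P * poly_mat p B * Q) $$ (i, j)" .
  qed (use w in \<open>simp_all add: poly_mat_def\<close>)
qed

lemma poly_mat_mat_diag: "poly_mat p (mat_diag n f) = mat_diag n (\<lambda>i. poly_eval p (f i))"
proof (rule eq_matI, goal_cases)
  case (1 i j)
  then show ?case
    by (cases "i = j") (simp_all add: index_poly_mat mat_diag_pow poly_eval_def)
qed (simp_all add: poly_mat_def)

lemma poly_mat_conj:
  assumes "U \<in> carrier_mat n n" "V \<in> carrier_mat n n" "U * V = 1\<^sub>m n" "V * U = 1\<^sub>m n"
    and "A \<in> carrier_mat n n" and "\<forall>i. coeff p i \<in> ring_center"
  shows "poly_mat p (U * A * V) = U * poly_mat p A * V"
  using assms by (intro poly_mat_similar_mat_wit similar_mat_witI[of _ _ n]) auto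

lemma conj_mult_mat:
  fixes U :: "'a::semiring_1 mat"
  assumes "U \<in> carrier_mat n n" "V \<in> carrier_mat n n" "V * U = 1\<^sub>m n"
    and "A \<in> carrier_mat n n" "B \<in> carrier_mat n n"
  shows "U * (A * B) * V = (U * A * V) * (U * B * V)"
proof -
  have "(U * A * V) * (U * B * V) = U * A * (V * U) * B * V"
    using assms(1,2,4,5) by (simp add: assoc_mult_mat[of _ n n _ n _ n])
  also have "\<dots> = U * (A * B) * V"
    using assms by (simp add: assoc_mult_mat[of _ n n _ n _ n] left_mult_one_mat[OF assms(5)])
  finally show ?thesis ..
qed

lemma poly_commutators_carrier: "X \<in> poly_commutators p n \<Longrightarrow> X \<in> carrier_mat n n"
  by (auto simp: poly_commutators_def intro!: minus_carrier_mat poly_mat_carrier mult_carrier_mat)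

lemma similar_mat_witD_carrier:
  assumes "similar_mat_wit A B P Q" "B \<in> carrier_mat n n"
  shows "A \<in> carrier_mat n n" "P \<in> carrier_mat n n" "Q \<in> carrier_mat n n"
    "P * Q = 1\<^sub>m n" "Q * P = 1\<^sub>m n" "A = P * B * Q"
  using similar_mat_witD2[OF assms(2) similar_mat_wit_sym[OF assms(1)]]
    similar_mat_witD2[OF _ assms(1)] by auto

lemma poly_commutators_similar:
  assumes coeffs: "\<forall>i. coeff p i \<in> ring_center"
    and X: "X \<in> poly_commutators p n" and sim: "similar_mat Y X"
  shows "Y \<in> poly_commutators p n"
proof -
  obtain A B where AB: "A \<in> carrier_mat n n" "B \<in> carrier_mat n n"
    and X_eq: "X = poly_mat p (A * B) - poly_mat p (B * A)"
    using X by (auto simp: poly_commutators_def)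
  obtain U V where "similar_mat_wit Y X U V"
    using sim by (auto simp: similar_mat_def)
  note w = similar_mat_witD_carrier[OF this poly_commutators_carrier[OF X]]
  have P: "poly_mat p (A * B) \<in> carrier_mat n n" "poly_mat p (B * A) \<in> carrier_mat n n"
    using AB by auto
  have "Y = U * poly_mat p (A * B) * V - U * poly_mat p (B * A) * V"
    using w P by (simp add: X_eq mult_minus_distrib_mat[OF w(2) P] minus_mult_distrib_mat[of _ n n])
  also have "\<dots> = poly_mat p (U * (A * B) * V) - poly_mat p (U * (B * A) * V)"
    using poly_mat_conj[OF w(2-5) _ coeffs] AB by simp
  also have "\<dots> = poly_mat p ((U * A * V) * (U * B * V)) - poly_mat p ((U * B * V) * (U * A * V))"
    by (simp only: conj_mult_mat[OF w(2,3,5) AB] conj_mult_mat[OF w(2,3,5) AB(2,1)])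
  finally have "Y = poly_mat p ((U * A * V) * (U * B * V)) - poly_mat p ((U * B * V) * (U * A * V))" .
  moreover have "U * A * V \<in> carrier_mat n n" "U * B * V \<in> carrier_mat n n"
    using w AB by auto
  ultimately show ?thesis
    unfolding poly_commutators_def by (intro CollectI exI conjI)
qed

lemma similar_poly_mat_diff_mem_poly_commutators:
  assumes coeffs: "\<forall>i. coeff p i \<in> ring_center" and L: "L \<in> carrier_mat n n"
    and "similar_mat T (poly_mat p L)" "similar_mat T' (poly_mat p L)"
  shows "T - T' \<in> poly_commutators p n"
proof -
  obtain U V U' V' where "similar_mat_wit T (poly_mat p L) U V" "similar_mat_wit T' (poly_mat p L) U' V'"
    using assms(3,4) by (auto simp: similar_mat_def)
  note w = similar_mat_witD_carrier[OF this(1) poly_mat_carrier[OF L]]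
    and w' = similar_mat_witD_carrier[OF this(2) poly_mat_carrier[OF L]]
  define A where "A = U * L * V'"
  define B where "B = U' * V"
  have "A * B = U * L * (V' * U') * V"
    using w(2,3) w'(2,3) L by (simp add: A_def B_def assoc_mult_mat[of _ n n _ n _ n])
  also have "\<dots> = U * L * V"
    using w'(5) by (simp add: right_mult_one_mat[OF mult_carrier_mat[OF w(2) L]])
  finally have AB: "A * B = U * L * V" .
  have "B * A = U' * (V * U) * L * V'"
    using w(2,3) w'(2,3) L by (simp add: A_def B_def assoc_mult_mat[of _ n n _ n _ n])
  then have BA: "B * A = U' * L * V'"
    using w(5) by (simp add: right_mult_one_mat[OF w'(2)])
  have "T - T' = poly_mat p (A * B) - poly_mat p (B * A)"
    by (simp only: AB BA poly_mat_conj[OF w(2-5) L coeffs] poly_mat_conj[OF w'(2-5) L coeffs] w(6) w'(6))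
  moreover have "A \<in> carrier_mat n n" "B \<in> carrier_mat n n"
    using w w' L by (auto simp: A_def B_def)
  ultimately show ?thesis
    unfolding poly_commutators_def by (intro CollectI exI conjI)
qed

definition triple_products :: "'a::semiring_0 mat set \<Rightarrow> 'a mat set" where
  "triple_products S = {X * Y * Z | X Y Z. X \<in> S \<and> Y \<in> S \<and> Z \<in> S}"

lemma triple_products_similar:
  assumes coeffs: "\<forall>i. coeff p i \<in> ring_center"
    and M: "M \<in> triple_products (poly_commutators p n)" and sim: "similar_mat M' M"
  shows "M' \<in> triple_products (poly_commutators p n)"
proof -
  obtain X Y Z where XYZ: "X \<in> poly_commutators p n" "Y \<in> poly_commutators p n"
    "Z \<in> poly_commutators p n" and M_eq: "M = X * Y * Z"
    using M by (auto simp: triple_products_def)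
  note carr = XYZ[THEN poly_commutators_carrier]
  have "M \<in> carrier_mat n n"
    using carr by (simp add: M_eq)
  obtain U V where "similar_mat_wit M' M U V"
    using sim by (auto simp: similar_mat_def)
  note w = similar_mat_witD_carrier[OF this \<open>M \<in> carrier_mat n n\<close>]
  have "M' = U * (X * Y * Z) * V"
    using w by (simp add: M_eq)
  also have "\<dots> = (U * (X * Y) * V) * (U * Z * V)"
    using carr by (intro conj_mult_mat[OF w(2,3,5)]) auto
  also have "U * (X * Y) * V = (U * X * V) * (U * Y * V)"
    by (rule conj_mult_mat[OF w(2,3,5) carr(1,2)])
  finally have "M' = (U * X * V) * (U * Y * V) * (U * Z * V)" .
  moreover have "U * C * V \<in> poly_commutators p n" if "C \<in> poly_commutators p n" for C
  proof -
    have "similar_mat (U * C * V) C"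
      using w poly_commutators_carrier[OF that] by (intro similar_matI[of _ _ U V n]) auto
    then show ?thesis
      by (rule poly_commutators_similar[OF coeffs that])
  qed
  ultimately show ?thesis
    unfolding triple_products_def using XYZ
    by (intro CollectI exI[of _ "U * X * V"] exI[of _ "U * Y * V"] exI[of _ "U * Z * V"]) simp
qed

section \<open>Zero-diagonal factors and elementary matrices\<close>

lemma ex_permutes_without_fixpoints:
  assumes "finite K" "card K \<noteq> 1"
  obtains \<sigma> where "\<sigma> permutes K" "\<forall>k\<in>K. \<sigma> k \<noteq> k"
proof (cases "K = {}")
  case True
  then show ?thesis
    using that[of id] by (simp add: permutes_id)
next
  case False
  obtain cs where cs: "distinct cs" "set cs = K"
    using finite_distinct_list[OF assms(1)] by blast
  have "length cs = card K"
    using distinct_card[OF cs(1)] cs(2) by simp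
  moreover have "card K \<noteq> 0"
    using assms(1) False by simp
  ultimately have "length cs \<ge> 2"
    using assms(2) by linarith
  have "\<forall>k\<in>K. cycle_of_list cs k \<noteq> k"
  proof
    fix k assume "k \<in> K"
    then obtain i where i: "i < length cs" "cs ! i = k"
      using cs(2) by (auto simp: in_set_conv_nth)
    have "cycle_of_list cs k = map (cycle_of_list cs) cs ! i"
      using i by simp
    also have "\<dots> = rotate 1 cs ! i"
      using cyclic_rotation[OF cs(1), of 1] by simp
    also have "\<dots> = cs ! ((1 + i) mod length cs)"
      by (rule nth_rotate[OF i(1)])
    finally have "cycle_of_list cs k = cs ! ((1 + i) mod length cs)" .
    moreover have "(1 + i) mod length cs \<noteq> i" "(1 + i) mod length cs < length cs"
      using i(1) \<open>length cs \<ge> 2\<close> by (auto simp: mod_if)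
    ultimately show "cycle_of_list cs k \<noteq> k"
      using i nth_eq_iff_index_eq[OF cs(1), of "(1 + i) mod length cs" i] by simp
  qed
  then show ?thesis
    using that cycle_permutes[of cs] cs(2) by blast
qed

lemma mat_diag_eq_mult_zero_diag:
  fixes f :: "nat \<Rightarrow> 'a::semiring_1"
  assumes "2 \<le> n"
  obtains X Y where "X \<in> carrier_mat n n" "Y \<in> carrier_mat n n"
    "\<forall>i<n. X $$ (i, i) = 0" "\<forall>i<n. Y $$ (i, i) = 0" "X * Y = mat_diag n f"
proof -
  obtain c where c: "c permutes {..<n}" and c_moves: "\<forall>k\<in>{..<n}. c k \<noteq> k"
    using ex_permutes_without_fixpoints[of "{..<n}"] assms by auto
  have "inv_into UNIV c i \<noteq> i" if "i < n" for i
    using c_moves that permutes_inv_eq[OF c] by auto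
  then have "\<forall>i<n. (mat_diag n f * perm_mat n (inv_into UNIV c)) $$ (i, i) = 0"
    by (simp add: mat_diag_mult_left[of _ n n])
  moreover have "\<forall>i<n. perm_mat n c $$ (i, i) = 0"
    using c_moves by simp
  moreover have "mat_diag n f * perm_mat n (inv_into UNIV c) * perm_mat n c = mat_diag n f"
    by (simp add: assoc_mult_mat[of _ n n _ n _ n] perm_mat_inv(2)[OF c])
  ultimately show ?thesis
    by (rule that[OF mult_carrier_mat[OF mat_diag_dim perm_mat_carrier] perm_mat_carrier])
qed

definition single_entry_mat :: "nat \<Rightarrow> nat \<Rightarrow> nat \<Rightarrow> 'a::zero \<Rightarrow> 'a mat" where
  "single_entry_mat n i j c = mat n n (\<lambda>(a, b). if a = i \<and> b = j then c else 0)"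

lemma single_entry_mat_carrier [simp]: "single_entry_mat n i j c \<in> carrier_mat n n"
  by (simp add: single_entry_mat_def)

lemma dim_single_entry_mat [simp]:
  "dim_row (single_entry_mat n i j c) = n" "dim_col (single_entry_mat n i j c) = n"
  by (simp_all add: single_entry_mat_def)

lemma index_single_entry_mat [simp]:
  "a < n \<Longrightarrow> b < n \<Longrightarrow> single_entry_mat n i j c $$ (a, b) = (if a = i \<and> b = j then c else 0)"
  by (simp add: single_entry_mat_def)

lemma single_entry_mat_mult_index:
  assumes "B \<in> carrier_mat n m" "a < n" "b < m" "j < n"
  shows "(single_entry_mat n i j c * B) $$ (a, b) = (if a = i then c * B $$ (j, b) else 0)"
  using assms by (auto simp: index_mult_mat_sum[of _ n n _ m] if_distrib[of "\<lambda>x. x * _"] cong: if_cong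
      simp del: index_mult_mat(1))

lemma mult_single_entry_mat_index:
  assumes "B \<in> carrier_mat m n" "a < m" "b < n" "i < n"
  shows "(B * single_entry_mat n i j c) $$ (a, b) = (if b = j then B $$ (a, i) * c else 0)"
  using assms by (auto simp: index_mult_mat_sum[of _ m n _ n] if_distrib[of "\<lambda>x. _ * x"] cong: if_cong
      simp del: index_mult_mat(1))

lemma single_entry_mat_mult_single_entry_mat:
  "j < n \<Longrightarrow> single_entry_mat n i j c * single_entry_mat n j l d = single_entry_mat n i l (c * d)"
  by (rule eq_matI) (auto simp: single_entry_mat_mult_index[of _ n n] simp del: index_mult_mat(1))

lemma transvection_mult_index:
  fixes B :: "'a::semiring_1 mat"
  assumes "B \<in> carrier_mat n m" "a < n" "b < m" "l < n"
  shows "((1\<^sub>m n + single_entry_mat n j l t) * B) $$ (a, b) =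
    B $$ (a, b) + (if a = j then t * B $$ (l, b) else 0)"
  using assms
  by (simp add: add_mult_distrib_mat[of _ n n _ _ m] single_entry_mat_mult_index del: index_mult_mat(1))

lemma mult_transvection_index:
  fixes B :: "'a::semiring_1 mat"
  assumes "B \<in> carrier_mat m n" "a < m" "b < n" "j < n"
  shows "(B * (1\<^sub>m n + single_entry_mat n j l t)) $$ (a, b) =
    B $$ (a, b) + (if b = l then B $$ (a, j) * t else 0)"
  using assms
  by (simp add: mult_add_distrib_mat[OF assms(1) one_carrier_mat single_entry_mat_carrier]
      mult_single_entry_mat_index del: index_mult_mat(1))

lemma transvection_inverse:
  fixes t :: "'a::ring_1"
  assumes "j < n" "l < n" "j \<noteq> l"
  shows "(1\<^sub>m n + single_entry_mat n j l t) * (1\<^sub>m n + single_entry_mat n j l (- t)) = 1\<^sub>m n"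
  using assms
  by (intro eq_matI) (auto simp: transvection_mult_index[of _ n n] simp del: index_mult_mat(1))

lemma transvection_conj_diag:
  fixes M :: "'a::ring_1 mat" and t :: 'a
  assumes M: "M \<in> carrier_mat n n" and lj: "l < n" "j < n" "l \<noteq> j"
  defines "M' \<equiv> (1\<^sub>m n + single_entry_mat n j l t) * M * (1\<^sub>m n + single_entry_mat n j l (- t))"
  shows "M' $$ (j, j) = M $$ (j, j) + t * M $$ (l, j)" and "M' $$ (l, l) = M $$ (l, l) - M $$ (l, j) * t"
proof -
  have WM: "(1\<^sub>m n + single_entry_mat n j l t) * M \<in> carrier_mat n n"
    by (rule mult_carrier_mat[OF add_carrier_mat[OF single_entry_mat_carrier] M])
  show "M' $$ (j, j) = M $$ (j, j) + t * M $$ (l, j)" "M' $$ (l, l) = M $$ (l, l) - M $$ (l, j) * t"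
    using lj unfolding M'_def
    by (simp_all add: mult_transvection_index[OF WM] transvection_mult_index[OF M]
        del: index_mult_mat(1))
qed

lemma similar_mat_nonzero_diag_entries:
  fixes M :: "'a::division_ring mat"
  assumes inf: "infinite (UNIV :: 'a set)" and M: "M \<in> carrier_mat n n"
    and lj: "l < n" "j < n" "l \<noteq> j" and q: "M $$ (l, j) \<noteq> 0"
  obtains M' where "similar_mat M' M" "M' \<in> carrier_mat n n" "M' $$ (j, j) \<noteq> 0" "M' $$ (l, l) \<noteq> 0"
proof -
  define q where "q = M $$ (l, j)"
  obtain t where t: "t \<notin> {- M $$ (j, j) * inverse q, inverse q * M $$ (l, l)}"
    using ex_new_if_finite[OF inf, of "{- M $$ (j, j) * inverse q, inverse q * M $$ (l, l)}"] by auto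
  define M' where
    "M' = (1\<^sub>m n + single_entry_mat n j l t) * M * (1\<^sub>m n + single_entry_mat n j l (- t))"
  have "M $$ (j, j) + t * q \<noteq> 0"
  proof
    assume "M $$ (j, j) + t * q = 0"
    then have tq: "t * q = - M $$ (j, j)"
      by (simp add: eq_neg_iff_add_eq_0 add.commute)
    have "t = t * q * inverse q"
      using q by (simp add: q_def mult.assoc)
    also have "\<dots> = - M $$ (j, j) * inverse q"
      by (simp only: tq)
    finally show False
      using t by simp
  qed
  moreover have "M $$ (l, l) - q * t \<noteq> 0"
  proof
    assume "M $$ (l, l) - q * t = 0"
    then have "t = inverse q * M $$ (l, l)"
      using q by (simp add: q_def mult.assoc[symmetric])
    with t show False by simp
  qed
  moreover have "M' \<in> carrier_mat n n"
    unfolding M'_def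
    by (rule mult_carrier_mat[OF mult_carrier_mat[OF add_carrier_mat[OF single_entry_mat_carrier] M]
          add_carrier_mat[OF single_entry_mat_carrier]])
  moreover have "similar_mat M' M"
    using M lj transvection_inverse[of j n l t] transvection_inverse[of j n l "- t"]
    by (intro similar_matI[of _ _ "1\<^sub>m n + single_entry_mat n j l t" _ n]) (auto simp: M'_def)
  ultimately show ?thesis
    using transvection_conj_diag[OF M lj, of t, folded M'_def] by (intro that[of M']) (simp_all add: q_def)
qed

locale distinct_poly_values =
  fixes p :: "'a::division_ring poly" and n :: nat and lam :: "nat \<Rightarrow> 'a"
  assumes coeffs_central: "\<forall>i. coeff p i \<in> ring_center"
    and lam_central: "\<forall>i. lam i \<in> ring_center"
    and inj_poly_eval_lam: "inj_on (\<lambda>i. poly_eval p (lam i)) {..<n}"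
begin

lemma diag_diff_mem_poly_commutators:
  assumes \<sigma>: "\<sigma> permutes {..<n}" and N: "N \<in> carrier_mat n n"
    and diag: "\<forall>i<n. N $$ (i, i) = poly_eval p (lam (\<sigma> i)) - poly_eval p (lam i)"
  shows "N \<in> poly_commutators p n"
proof -
  define a where "a i = poly_eval p (lam i)" for i
  have a_central: "a i \<in> ring_center" for i
    using coeffs_central lam_central by (simp add: a_def poly_eval_in_ring_center)
  have a_inj: "a i = a j \<longleftrightarrow> i = j" if "i < n" "j < n" for i j
    using inj_poly_eval_lam that by (auto simp: a_def inj_on_def)
  have \<sigma>_less: "\<sigma> i < n" if "i < n" for i
    using permutes_in_image[OF \<sigma>] that by simp
  have \<sigma>_inj: "\<sigma> i = \<sigma> j \<longleftrightarrow> i = j" for i j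
    using permutes_inj[OF \<sigma>] by (simp add: inj_eq)
  define T1 where "T1 = mat n n (\<lambda>(i, j). if i < j then N $$ (i, j) else if i = j then a (\<sigma> i) else 0)"
  define T2 where "T2 = mat n n (\<lambda>(i, j). if j < i then - N $$ (i, j) else if i = j then a i else 0)"
  have "N = T1 - T2"
    by (rule eq_matI) (use N diag in \<open>auto simp: T1_def T2_def a_def\<close>)
  have "similar_mat T1 (mat_diag n (\<lambda>i. T1 $$ (i, i)))"
    using a_central a_inj \<sigma>_less \<sigma>_inj
    by (intro upper_triangular_similar_mat_diag) (auto simp: T1_def upper_triangular_def)
  also have "mat_diag n (\<lambda>i. T1 $$ (i, i)) = mat_diag n (\<lambda>i. a (\<sigma> i))"
    by (rule mat_diag_cong) (simp add: T1_def)
  finally have T1: "similar_mat T1 (mat_diag n a)"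
    by (rule similar_mat_trans[OF _ similar_mat_diag_permute[OF \<sigma>]])
  have "similar_mat T2 (mat_diag n (\<lambda>i. T2 $$ (i, i)))"
    using a_central a_inj by (intro lower_triangular_similar_mat_diag) (auto simp: T2_def)
  also have "mat_diag n (\<lambda>i. T2 $$ (i, i)) = mat_diag n a"
    by (rule mat_diag_cong) (simp add: T2_def)
  finally have T2: "similar_mat T2 (mat_diag n a)" .
  have "poly_mat p (mat_diag n lam) = mat_diag n a"
    by (simp add: poly_mat_mat_diag a_def[abs_def])
  then show ?thesis
    using similar_poly_mat_diff_mem_poly_commutators[OF coeffs_central mat_diag_dim[of n lam], of T1 T2]
      T1 T2 \<open>N = T1 - T2\<close> by simp
qed

lemma zero_diag_mem_poly_commutators:
  assumes "N \<in> carrier_mat n n" "\<forall>i<n. N $$ (i, i) = 0"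
  shows "N \<in> poly_commutators p n"
  using assms by (intro diag_diff_mem_poly_commutators[OF permutes_id]) auto

lemma rescaled_mem_poly_commutators:
  assumes M: "M \<in> carrier_mat n n" and card: "card {k. k < n \<and> M $$ (k, k) \<noteq> 0} \<noteq> 1"
  obtains g where "\<forall>k. g k \<noteq> 0" "mat_diag n g * M \<in> poly_commutators p n"
proof -
  define K where "K = {k. k < n \<and> M $$ (k, k) \<noteq> 0}"
  have K_sub: "K \<subseteq> {..<n}"
    by (auto simp: K_def)
  obtain \<sigma> where "\<sigma> permutes K" and \<sigma>_moves: "\<forall>k\<in>K. \<sigma> k \<noteq> k"
    using ex_permutes_without_fixpoints[OF finite_subset[OF K_sub]] card by (auto simp: K_def)
  then have \<sigma>: "\<sigma> permutes {..<n}"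
    using permutes_subset K_sub by blast
  define d where "d k = poly_eval p (lam (\<sigma> k)) - poly_eval p (lam k)" for k
  have d_nonzero: "d k \<noteq> 0" if "k \<in> K" for k
  proof
    assume "d k = 0"
    moreover have "k < n" "\<sigma> k < n"
      using that K_sub permutes_in_image[OF \<sigma>] by auto
    ultimately have "\<sigma> k = k"
      using inj_poly_eval_lam by (auto simp: d_def dest: inj_onD)
    with \<sigma>_moves that show False by blast
  qed
  define g where "g k = (if k \<in> K then d k * inverse (M $$ (k, k)) else 1)" for k
  have "\<forall>k. g k \<noteq> 0"
    using d_nonzero by (auto simp: g_def K_def)
  moreover have "mat_diag n g * M \<in> poly_commutators p n"
  proof (rule diag_diff_mem_poly_commutators[OF \<sigma>])
    have "\<sigma> k = k" if "k \<notin> K" for k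
      using \<open>\<sigma> permutes K\<close> that by (simp add: permutes_not_in)
    then show "\<forall>i<n. (mat_diag n g * M) $$ (i, i) = poly_eval p (lam (\<sigma> i)) - poly_eval p (lam i)"
      using M by (auto simp: mat_diag_mult_left[of _ n n] g_def d_def K_def mult.assoc)
  qed (rule mult_carrier_mat[OF mat_diag_dim M])
  ultimately show ?thesis
    by (rule that)
qed

lemma triple_products_if_card_nonzero_diag_ne_1:
  assumes n2: "2 \<le> n" and M: "M \<in> carrier_mat n n"
    and card: "card {k. k < n \<and> M $$ (k, k) \<noteq> 0} \<noteq> 1"
  shows "M \<in> triple_products (poly_commutators p n)"
proof -
  obtain g where g: "\<forall>k. g k \<noteq> 0" "mat_diag n g * M \<in> poly_commutators p n"
    by (rule rescaled_mem_poly_commutators[OF M card])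
  obtain X Y where XY: "X \<in> carrier_mat n n" "Y \<in> carrier_mat n n"
    "\<forall>i<n. X $$ (i, i) = 0" "\<forall>i<n. Y $$ (i, i) = 0" "X * Y = mat_diag n (\<lambda>k. inverse (g k))"
    by (rule mat_diag_eq_mult_zero_diag[OF n2, of "\<lambda>k. inverse (g k)"])
  have "X * Y * (mat_diag n g * M) = (mat_diag n (\<lambda>k. inverse (g k)) * mat_diag n g) * M"
    by (simp only: XY(5) assoc_mult_mat[OF mat_diag_dim mat_diag_dim M])
  also have "\<dots> = M"
    using M g(1) by simp
  finally show ?thesis
    unfolding triple_products_def using XY g(2) zero_diag_mem_poly_commutators
    by (intro CollectI exI[of _ X] exI[of _ Y] exI[of _ "mat_diag n g * M"]) simp
qed

lemma single_diag_entry_mem_triple_products: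
  assumes "3 \<le> n" "k < n"
  shows "single_entry_mat n k k c \<in> triple_products (poly_commutators p n)"
proof -
  obtain i j where ij: "i < n" "j < n" "i \<noteq> k" "j \<noteq> k" "i \<noteq> j"
  proof -
    consider "k = 0" | "k = 1" | "k \<ge> 2"
      by linarith
    then show ?thesis
      using that[of 1 2] that[of 0 2] that[of 0 1] assms by cases auto
  qed
  have off_diag: "single_entry_mat n a b x \<in> poly_commutators p n" if "a \<noteq> b" for a b x
    using that by (intro zero_diag_mem_poly_commutators) auto
  have "single_entry_mat n k k c = single_entry_mat n k i c * single_entry_mat n i j 1 * single_entry_mat n j k 1"
    using ij by (simp add: single_entry_mat_mult_single_entry_mat)
  then show ?thesis
    unfolding triple_products_def using ij off_diag
    by (intro CollectI exI[of _ "single_entry_mat n k i c"] exI[of _ "single_entry_mat n i j 1"]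
        exI[of _ "single_entry_mat n j k 1"]) simp
qed

lemma mem_triple_products_poly_commutators:
  assumes n: "3 \<le> n" and inf: "infinite (UNIV :: 'a set)" and M: "M \<in> carrier_mat n n"
  shows "M \<in> triple_products (poly_commutators p n)"
proof (cases "card {k. k < n \<and> M $$ (k, k) \<noteq> 0} = 1")
  case False
  then show ?thesis
    using n M by (intro triple_products_if_card_nonzero_diag_ne_1) auto
next
  case True
  then obtain k where K: "{k. k < n \<and> M $$ (k, k) \<noteq> 0} = {k}"
    by (rule card_1_singletonE)
  show ?thesis
  proof (cases "\<exists>l j. l < n \<and> j < n \<and> l \<noteq> j \<and> M $$ (l, j) \<noteq> 0")
    case True
    then obtain l j where "l < n" "j < n" "l \<noteq> j" "M $$ (l, j) \<noteq> 0"
      by blast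
    then obtain M' where M': "similar_mat M' M" "M' \<in> carrier_mat n n"
      and "M' $$ (j, j) \<noteq> 0" "M' $$ (l, l) \<noteq> 0"
      by (rule similar_mat_nonzero_diag_entries[OF inf M])
    then have "{j, l} \<subseteq> {k. k < n \<and> M' $$ (k, k) \<noteq> 0}"
      using \<open>l < n\<close> \<open>j < n\<close> by auto
    then have "card {k. k < n \<and> M' $$ (k, k) \<noteq> 0} \<noteq> 1"
      using card_mono[of "{k. k < n \<and> M' $$ (k, k) \<noteq> 0}" "{j, l}"] \<open>l \<noteq> j\<close> by auto
    then have "M' \<in> triple_products (poly_commutators p n)"
      using n M' by (intro triple_products_if_card_nonzero_diag_ne_1) auto
    then show ?thesis
      by (rule triple_products_similar[OF coeffs_central _ similar_mat_sym[OF M'(1)]])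
  next
    case False
    then have M_eq: "M = single_entry_mat n k k (M $$ (k, k))"
      using M K by (intro eq_matI) auto
    have "k < n"
      using K by blast
    show ?thesis
      by (subst M_eq) (rule single_diag_entry_mem_triple_products[OF n \<open>k < n\<close>])
  qed
qed

end

theorem theorem4p6:
  fixes p :: "'a::division_ring poly" and n :: nat
  assumes "infinite (ring_center :: 'a set)"
    and "n \<ge> 3"
    and "\<forall>i. coeff p i \<in> ring_center"
    and "degree p \<ge> 1"
  shows "\<forall>M \<in> carrier_mat n n. \<exists>X Y Z. X \<in> poly_commutators p n \<and> Y \<in> poly_commutators p n
           \<and> Z \<in> poly_commutators p n \<and> M = X * Y * Z"
proof
  fix M :: "'a mat"
  assume M: "M \<in> carrier_mat n n"
  obtain lam where "\<forall>i. lam i \<in> ring_center" "inj_on (\<lambda>i. poly_eval p (lam i)) {..<n}"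
    using ex_central_points_distinct_poly_values[OF assms(1,3,4)] .
  then interpret distinct_poly_values p n lam
    using assms(3) by unfold_locales
  have "M \<in> triple_products (poly_commutators p n)"
    using mem_triple_products_poly_commutators[OF assms(2) infinite_super[OF subset_UNIV assms(1)] M] .
  then show "\<exists>X Y Z. X \<in> poly_commutators p n \<and> Y \<in> poly_commutators p n
      \<and> Z \<in> poly_commutators p n \<and> M = X * Y * Z"
    by (auto simp: triple_products_def)
qed

end
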